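(* Let $n\ge0$ be an integer and define $\tilde\Phi_n:(-1,1)\to\mathbb R$ by $$\tilde\Phi_n(t)=\sum_{k=0}^\infty\alpha_k^{(n)}Q_k(t).$$ Let $t_1<\dots<t_n$ be the roots of $\psi_n$ in $(-1,1)$. Then for every $j=1,\dots,n$, $$\tilde\Phi_n(t_j)=\frac12\int_{-1}^1\frac{\psi_n(t)\,dt}{t_j-t}.$$
   Context: For a real number $c>0$, let $\psi_0,\psi_1,\dots$ be the prolate spheroidal wave functions of band limit $c$: the real $L^2[-1,1]$-normalized eigenfunctions of $F_c[\varphi](x)=\int_{-1}^1\varphi(t)e^{icxt}\,dt$ (eigenvalues ordered by decreasing absolute value); $\psi_n$ has exactly $n$ simple roots in $(-1,1)$. Let $P_k$ be the Legendre polynomials, and $\alpha_k^{(n)}=(k+\tfrac12)\int_{-1}^1\psi_n(x)P_k(x)\,dx$, so that $\psi_n=\sum_k\alpha_k^{(n)}P_k$ on $[-1,1]$. The Legendre functions of the second kind are $Q_0(t)=\frac12\log\frac{1+t}{1-t}$, $Q_1(t)=\frac t2\log\frac{1+t}{1-t}-1$, and $(k+1)Q_{k+1}(t)=(2k+1)tQ_k(t)-kQ_{k-1}(t)$ for $k\ge1$. *)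

theory Defs
  imports "HOL-Analysis.Analysis"
begin

fun legendreP :: "nat \<Rightarrow> real \<Rightarrow> real" where
  "legendreP 0 x = 1"
| "legendreP (Suc 0) x = x"
| "legendreP (Suc (Suc k)) x =
     ((2 * real k + 3) * x * legendreP (Suc k) x - (real k + 1) * legendreP k x) / (real k + 2)"

fun legendreQ :: "nat \<Rightarrow> real \<Rightarrow> real" where
  "legendreQ 0 t = ln ((1 + t) / (1 - t)) / 2"
| "legendreQ (Suc 0) t = t / 2 * ln ((1 + t) / (1 - t)) - 1"
| "legendreQ (Suc (Suc k)) t =
     ((2 * real k + 3) * t * legendreQ (Suc k) t - (real k + 1) * legendreQ k t) / (real k + 2)"

definition Fc :: "real \<Rightarrow> (real \<Rightarrow> complex) \<Rightarrow> real \<Rightarrow> complex" where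
  "Fc c \<phi> x = integral {-1..1} (\<lambda>t. \<phi> t * exp (\<i> * complex_of_real (c * x * t)))"

text \<open>Eigenvalues of F_c (eigenfunctions are entire, so continuity on [-1,1] loses nothing).\<close>
definition Fc_eigenvalue :: "real \<Rightarrow> complex \<Rightarrow> bool" where
  "Fc_eigenvalue c \<mu> \<longleftrightarrow>
     (\<exists>\<phi> :: real \<Rightarrow> complex. continuous_on {-1..1} \<phi> \<and> (\<exists>x\<in>{-1..1}. \<phi> x \<noteq> 0) \<and>
        (\<forall>x\<in>{-1..1}. Fc c \<phi> x = \<mu> * \<phi> x))"

text \<open>psi is (a choice of sign of) the n-th prolate spheroidal wave function of band limit c:
  a real, L^2[-1,1]-normalized eigenfunction of F_c whose eigenvalue is preceded by exactly
  n eigenvalues of strictly larger absolute value (ordering by decreasing absolute value).\<close>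
definition is_pswf :: "real \<Rightarrow> nat \<Rightarrow> (real \<Rightarrow> real) \<Rightarrow> bool" where
  "is_pswf c n \<psi> \<longleftrightarrow>
     continuous_on {-1..1} \<psi> \<and>
     integral {-1..1} (\<lambda>x. (\<psi> x)\<^sup>2) = 1 \<and>
     (\<exists>lam. (\<forall>x\<in>{-1..1}. Fc c (\<lambda>t. complex_of_real (\<psi> t)) x = lam * complex_of_real (\<psi> x)) \<and>
          finite {\<mu>. Fc_eigenvalue c \<mu> \<and> cmod \<mu> > cmod lam} \<and>
          card {\<mu>. Fc_eigenvalue c \<mu> \<and> cmod \<mu> > cmod lam} = n)"

definition legendre_coeff :: "(real \<Rightarrow> real) \<Rightarrow> nat \<Rightarrow> real" where
  "legendre_coeff \<psi> k = (real k + 1/2) * integral {-1..1} (\<lambda>x. \<psi> x * legendreP k x)"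

end

theory Submission
  imports Defs
begin

text \<open>
  Since \<open>\<psi>\<close> is an eigenfunction of \<open>F\<^sub>c\<close>, it is the restriction of an entire function whose
  Taylor coefficients decay like \<open>c\<^sup>m / m!\<close>. At a root \<open>t\<close> the quotient
  \<open>G s = \<psi> s / (t - s)\<close> is therefore again an everywhere convergent power series. The
  Christoffel--Darboux formula turns the \<open>N\<close>-th partial sum of \<open>\<Sum>\<^sub>k \<alpha>\<^sub>k Q\<^sub>k t\<close> into half the
  integral of \<open>G\<close> minus a boundary term involving \<open>\<integral> G P\<^sub>N\<close> and \<open>\<integral> G P\<^sub>N\<^sub>+\<^sub>1\<close>. As \<open>P\<^sub>N\<close> is
  orthogonal to all polynomials of degree below \<open>N\<close>, only the tail of the power series of \<open>G\<close>
  contributes to these integrals, and its factorial decay beats the crude geometric bounds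
  \<open>\<bar>P\<^sub>k\<bar>, \<bar>Q\<^sub>k t\<bar> = O(3\<^sup>k)\<close>, so the boundary term tends to zero.
\<close>

section \<open>Legendre functions\<close>

lemma continuous_on_legendreP [continuous_intros]: "continuous_on S (legendreP k)"
proof -
  have "continuous_on S (\<lambda>x. legendreP k x)"
    by (induction k rule: induct_nat_012) (auto intro!: continuous_intros)
  then show ?thesis
    by simp
qed

lemma three_term_recurrence_abs_le:
  fixes f :: "nat \<Rightarrow> real"
  assumes rec: "\<And>k. f (Suc (Suc k)) =
      ((2 * real k + 3) * x * f (Suc k) - (real k + 1) * f k) / (real k + 2)"
    and x: "\<bar>x\<bar> \<le> 1" and "\<bar>f 0\<bar> \<le> C" and "\<bar>f 1\<bar> \<le> C"
  shows "\<bar>f k\<bar> \<le> C * 3 ^ k"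
proof (induction k rule: induct_nat_012)
  case (ge2 k)
  have "C \<ge> 0"
    using assms(3) by linarith
  have "\<bar>x * f (Suc k)\<bar> \<le> \<bar>f (Suc k)\<bar>"
    using x by (simp add: abs_mult mult_left_le_one_le)
  then have "\<bar>(2 * real k + 3) * x * f (Suc k)\<bar> \<le> (2 * real k + 3) * (3 * (C * 3 ^ k))"
    using ge2.IH(2) by (simp add: abs_mult mult.assoc mult_left_mono del: mult_le_cancel_left_pos)
  moreover have "\<bar>(real k + 1) * f k\<bar> \<le> (real k + 1) * (C * 3 ^ k)"
    using ge2.IH(1) by (simp add: abs_mult mult_left_mono del: mult_le_cancel_left_pos)
  ultimately have "\<bar>(2 * real k + 3) * x * f (Suc k) - (real k + 1) * f k\<bar>
      \<le> (2 * real k + 3) * (3 * (C * 3 ^ k)) + (real k + 1) * (C * 3 ^ k)"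
    by (smt (verit) abs_triangle_ineq4)
  also have "\<dots> \<le> (real k + 2) * (C * 3 ^ Suc (Suc k))"
    using \<open>C \<ge> 0\<close> by (simp add: algebra_simps)
  finally show ?case
    by (simp add: rec abs_divide pos_divide_le_eq mult.commute)
qed (use assms in auto)

lemma abs_legendreP_le: "\<bar>x\<bar> \<le> 1 \<Longrightarrow> \<bar>legendreP k x\<bar> \<le> 3 ^ k"
  using three_term_recurrence_abs_le[of "\<lambda>k. legendreP k x" x 1 k] by auto

lemma abs_legendreQ_le:
  "\<bar>t\<bar> \<le> 1 \<Longrightarrow> \<bar>legendreQ k t\<bar> \<le> (\<bar>legendreQ 0 t\<bar> + \<bar>legendreQ 1 t\<bar>) * 3 ^ k"
  by (rule three_term_recurrence_abs_le[of "\<lambda>k. legendreQ k t" t]) auto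

lemma legendre_christoffel_darboux:
  "real (Suc N) * (legendreP (Suc N) s * legendreQ N t - legendreP N s * legendreQ (Suc N) t)
    = 1 + (s - t) * (\<Sum>k\<le>N. (2 * real k + 1) * legendreP k s * legendreQ k t)"
proof (induction N)
  case 0
  then show ?case
    by (simp add: field_simps)
next
  case (Suc N)
  have P: "(real N + 2) * legendreP (Suc (Suc N)) s
      = (2 * real N + 3) * s * legendreP (Suc N) s - (real N + 1) * legendreP N s"
    by simp
  have Q: "(real N + 2) * legendreQ (Suc (Suc N)) t
      = (2 * real N + 3) * t * legendreQ (Suc N) t - (real N + 1) * legendreQ N t"
    by simp
  have "real (Suc (Suc N)) * (legendreP (Suc (Suc N)) s * legendreQ (Suc N) t
          - legendreP (Suc N) s * legendreQ (Suc (Suc N)) t)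
      = ((real N + 2) * legendreP (Suc (Suc N)) s) * legendreQ (Suc N) t
          - legendreP (Suc N) s * ((real N + 2) * legendreQ (Suc (Suc N)) t)"
    by (simp add: algebra_simps)
  also have "\<dots> = (2 * real N + 3) * (s - t) * legendreP (Suc N) s * legendreQ (Suc N) t
      + real (Suc N) * (legendreP (Suc N) s * legendreQ N t - legendreP N s * legendreQ (Suc N) t)"
    unfolding P Q by (simp add: algebra_simps)
  finally show ?case
    using Suc by (simp add: algebra_simps)
qed

section \<open>Moments of Legendre polynomials\<close>

definition legendre_moment :: "nat \<Rightarrow> nat \<Rightarrow> real" where
  "legendre_moment j k = integral {-1..1} (\<lambda>x. x ^ j * legendreP k x)"

text \<open>
  The value of \<open>legendre_moment (k + 2 * r) k\<close>.
\<close>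

definition legendre_moment_formula :: "nat \<Rightarrow> nat \<Rightarrow> real" where
  "legendre_moment_formula k r =
     2 ^ (k + 1) * fact (k + 2 * r) * fact (k + r) / (fact r * fact (2 * k + 2 * r + 1))"

lemma legendre_moment_formula_Suc_left:
  "(2 * real k + 2 * real r + 3) * legendre_moment_formula (Suc k) r
     = (real k + 2 * real r + 1) * legendre_moment_formula k r"
proof -
  define A B R D :: real
    where "A = fact (k + 2 * r)" and "B = fact (k + r)" and "R = fact r"
      and "D = fact (2 * k + 2 * r + 1)"
  have "R > 0" "D > 0"
    unfolding R_def D_def by simp_all
  have F1: "legendre_moment_formula (Suc k) r = 2 ^ (k + 2) * ((real k + 2 * real r + 1) * A)
      * ((real k + real r + 1) * B)
      / (R * ((2 * real k + 2 * real r + 3) * (2 * real k + 2 * real r + 2) * D))"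
    unfolding legendre_moment_formula_def A_def B_def R_def D_def
    by (simp add: algebra_simps numeral_eq_Suc)
  have F0: "legendre_moment_formula k r = 2 ^ (k + 1) * A * B / (R * D)"
    unfolding legendre_moment_formula_def A_def B_def R_def D_def ..
  have "2 * real k + 2 * real r + 3 > 0" "real k + real r + 1 > 0"
    by linarith+
  then show ?thesis
    unfolding F0 F1 using \<open>R > 0\<close> \<open>D > 0\<close> by (simp add: divide_simps)
qed

lemma legendre_moment_formula_Suc_right:
  "2 * (real r + 1) * (2 * real k + 2 * real r + 3) * legendre_moment_formula k (Suc r)
     = (real k + 2 * real r + 1) * (real k + 2 * real r + 2) * legendre_moment_formula k r"
proof -
  define A B R D :: real
    where "A = fact (k + 2 * r)" and "B = fact (k + r)" and "R = fact r"
      and "D = fact (2 * k + 2 * r + 1)"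
  have "R > 0" "D > 0"
    unfolding R_def D_def by simp_all
  have F1: "legendre_moment_formula k (Suc r) = 2 ^ (k + 1)
      * ((real k + 2 * real r + 2) * (real k + 2 * real r + 1) * A) * ((real k + real r + 1) * B)
      / (((real r + 1) * R) * ((2 * real k + 2 * real r + 3) * (2 * real k + 2 * real r + 2) * D))"
    unfolding legendre_moment_formula_def A_def B_def R_def D_def
    by (simp add: algebra_simps numeral_eq_Suc)
  have F0: "legendre_moment_formula k r = 2 ^ (k + 1) * A * B / (R * D)"
    unfolding legendre_moment_formula_def A_def B_def R_def D_def ..
  have "2 * real k + 2 * real r + 3 > 0" "real k + real r + 1 > 0"
    by linarith+
  then show ?thesis
    unfolding F0 F1 using \<open>R > 0\<close> \<open>D > 0\<close> by (simp add: divide_simps) (simp add: algebra_simps)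
qed

lemma legendre_moment_formula_0: "legendre_moment_formula 0 r = 2 / (2 * real r + 1)"
  unfolding legendre_moment_formula_def by (simp add: divide_simps)

lemma legendre_moment_formula_1: "legendre_moment_formula 1 r = 2 / (2 * real r + 3)"
proof -
  have "2 * real r + 1 \<noteq> 0" "2 * real r + 3 \<noteq> 0"
    by linarith+
  then have "(2 * real r + 1) * legendre_moment_formula 0 r = 2"
    unfolding legendre_moment_formula_0 by (simp add: field_simps)
  then have "(2 * real r + 3) * legendre_moment_formula 1 r = 2"
    using legendre_moment_formula_Suc_left[of 0 r] by simp
  then show ?thesis
    using \<open>2 * real r + 3 \<noteq> 0\<close> by (simp add: nonzero_eq_divide_eq mult.commute)
qed

lemma legendre_moment_formula_Suc_Suc_left:
  "(2 * real k + 2 * real r + 5) * legendre_moment_formula (Suc (Suc k)) r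
     = 2 * (real r + 1) * legendre_moment_formula k (Suc r)"
proof -
  have "(2 * real k + 2 * real r + 3)
        * ((2 * real k + 2 * real r + 5) * legendre_moment_formula (Suc (Suc k)) r)
      = (real k + 2 * real r + 2)
        * ((2 * real k + 2 * real r + 3) * legendre_moment_formula (Suc k) r)"
    using legendre_moment_formula_Suc_left[of "Suc k" r] by (simp add: algebra_simps)
  also have "\<dots> = (real k + 2 * real r + 1) * (real k + 2 * real r + 2) * legendre_moment_formula k r"
    by (simp add: legendre_moment_formula_Suc_left)
  also have "\<dots> = (2 * real k + 2 * real r + 3) * (2 * (real r + 1) * legendre_moment_formula k (Suc r))"
    by (simp flip: legendre_moment_formula_Suc_right)
  finally show ?thesis
    by simp
qed

lemma legendre_moment_formula_rec:
  "(real k + 2) * legendre_moment_formula (Suc (Suc k)) r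
     = (2 * real k + 3) * legendre_moment_formula (Suc k) (Suc r)
       - (real k + 1) * legendre_moment_formula k (Suc r)"
proof -
  have "(2 * real k + 2 * real r + 5) * ((2 * real k + 3) * legendre_moment_formula (Suc k) (Suc r)
        - (real k + 1) * legendre_moment_formula k (Suc r))
      = (2 * real k + 3) * ((2 * real k + 2 * real r + 5) * legendre_moment_formula (Suc k) (Suc r))
        - (real k + 1) * (2 * real k + 2 * real r + 5) * legendre_moment_formula k (Suc r)"
    by (simp add: algebra_simps)
  also have "\<dots> = (2 * real k + 3) * (real k + 2 * real r + 3) * legendre_moment_formula k (Suc r)
        - (real k + 1) * (2 * real k + 2 * real r + 5) * legendre_moment_formula k (Suc r)"
    using legendre_moment_formula_Suc_left[of k "Suc r"] by (simp add: algebra_simps)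
  also have "\<dots> = (real k + 2) * (2 * (real r + 1) * legendre_moment_formula k (Suc r))"
    by (simp add: algebra_simps)
  also have "\<dots> = (2 * real k + 2 * real r + 5) * ((real k + 2) * legendre_moment_formula (Suc (Suc k)) r)"
    by (metis legendre_moment_formula_Suc_Suc_left mult.left_commute)
  finally show ?thesis
    by simp
qed

lemma power_has_integral_symmetric:
  "((\<lambda>x::real. x ^ j) has_integral (1 + (-1) ^ j) / real (Suc j)) {-1..1}"
proof -
  have "((\<lambda>x::real. x ^ j) has_integral 1 ^ Suc j / real (Suc j) - (-1) ^ Suc j / real (Suc j)) {-1..1}"
  proof (rule fundamental_theorem_of_calculus)
    fix x :: real
    have "((\<lambda>x. x ^ Suc j / real (Suc j)) has_real_derivative x ^ j) (at x)"
      by (auto intro!: derivative_eq_intros simp del: of_nat_Suc power_Suc)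
    then show "((\<lambda>x. x ^ Suc j / real (Suc j)) has_vector_derivative x ^ j) (at x within {-1..1})"
      by (simp add: has_real_derivative_iff_has_vector_derivative has_vector_derivative_at_within)
  qed simp
  then show ?thesis
    by (simp add: add_divide_distrib)
qed

lemma integrable_power_legendreP: "(\<lambda>x. x ^ j * legendreP k x) integrable_on {-1..1::real}"
  by (intro integrable_continuous_real continuous_intros)

lemma legendre_moment_Suc_Suc:
  "(real k + 2) * legendre_moment j (Suc (Suc k))
     = (2 * real k + 3) * legendre_moment (Suc j) (Suc k) - (real k + 1) * legendre_moment j k"
proof -
  have "legendre_moment j (Suc (Suc k)) = integral {-1..1} (\<lambda>x.
      ((2 * real k + 3) * (x ^ Suc j * legendreP (Suc k) x) - (real k + 1) * (x ^ j * legendreP k x))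
      / (real k + 2))"
    unfolding legendre_moment_def by (rule integral_cong) (simp add: algebra_simps diff_divide_distrib)
  also have "\<dots> = ((2 * real k + 3) * legendre_moment (Suc j) (Suc k) - (real k + 1) * legendre_moment j k)
      / (real k + 2)"
    unfolding legendre_moment_def
    by (simp add: integral_diff integrable_power_legendreP integrable_on_cmult_left integral_mult_right
        del: power_Suc)
  finally show ?thesis
    by (simp add: field_simps)
qed

lemma legendre_moment_0: "legendre_moment j 0 = (1 + (-1) ^ j) / real (Suc j)"
  unfolding legendre_moment_def using power_has_integral_symmetric[of j] by (simp add: integral_unique)

lemma legendre_moment_eq:
  "legendre_moment j k =
     (if k \<le> j \<and> even (j - k) then legendre_moment_formula k ((j - k) div 2) else 0)"
proof (induction k arbitrary: j rule: induct_nat_012)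
  case 0
  then show ?case
    by (auto simp: legendre_moment_0 legendre_moment_formula_0 elim!: evenE)
next
  case 1
  have row1: "legendre_moment j (Suc 0) = legendre_moment (Suc j) 0"
    unfolding legendre_moment_def by (simp add: mult.commute)
  show ?case
  proof (cases "even j")
    case True
    then show ?thesis
      by (auto simp: row1 legendre_moment_0)
  next
    case False
    then obtain r where j: "j = 2 * r + 1"
      by (blast elim: oddE)
    then show ?thesis
      using legendre_moment_formula_1[of r] unfolding row1 by (simp add: legendre_moment_0 algebra_simps)
  qed
next
  case (ge2 k)
  have rec: "legendre_moment j (Suc (Suc k)) = v"
    if "(real k + 2) * v
        = (2 * real k + 3) * legendre_moment (Suc j) (Suc k) - (real k + 1) * legendre_moment j k"
    for v
  proof -
    have "(real k + 2) * legendre_moment j (Suc (Suc k)) = (real k + 2) * v"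
      using legendre_moment_Suc_Suc[of k j] that by linarith
    moreover have "real k + 2 \<noteq> 0"
      by linarith
    ultimately show ?thesis
      by simp
  qed
  consider r where "j = k + 2 * Suc r" | "j = k" | "\<not> (k \<le> j \<and> even (j - k))"
  proof (cases "k \<le> j \<and> even (j - k)")
    case True
    then obtain q where "j = k + 2 * q"
      by (metis evenE le_add_diff_inverse)
    then show ?thesis
      using that by (cases q) auto
  qed (use that in blast)
  then show ?case
  proof cases
    case 1
    then have "legendre_moment j (Suc (Suc k)) = legendre_moment_formula (Suc (Suc k)) r"
      using ge2 by (intro rec) (simp add: legendre_moment_formula_rec)
    then show ?thesis
      using 1 by simp
  next
    case 2
    then have "legendre_moment j (Suc (Suc k)) = 0"
      using ge2 legendre_moment_formula_Suc_left[of k 0] by (intro rec) simp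
    then show ?thesis
      using 2 by simp
  next
    case 3
    then have "legendre_moment j (Suc (Suc k)) = 0"
      using ge2 by (intro rec) auto
    moreover have "\<not> (Suc (Suc k) \<le> j \<and> even (j - Suc (Suc k)))"
      using 3 by presburger
    ultimately show ?thesis
      by (simp only: if_not_P if_False)
  qed
qed

lemma integral_polynomial_legendreP:
  assumes "m \<le> k"
  shows "integral {-1..1} (\<lambda>x. (\<Sum>i<m. c i * x ^ i) * legendreP k x) = 0"
proof -
  have "integral {-1..1} (\<lambda>x. (\<Sum>i<m. c i * x ^ i) * legendreP k x) = (\<Sum>i<m. c i * legendre_moment i k)"
    unfolding legendre_moment_def sum_distrib_right mult.assoc
    by (subst integral_sum) (auto intro!: integrable_power_legendreP integrable_on_mult_right)
  also have "\<dots> = 0"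
    using assms by (intro sum.neutral) (simp add: legendre_moment_eq)
  finally show ?thesis .
qed

section \<open>Eigenfunctions of \<open>F\<^sub>c\<close> are entire\<close>

lemma powser_coeffs_eq_0:
  fixes r :: "nat \<Rightarrow> real"
  assumes "\<And>x. x \<in> {-1..1} \<Longrightarrow> (\<lambda>m. r m * x ^ m) sums 0"
  shows "r k = 0"
proof (induction k rule: less_induct)
  case (less k)
  have "(\<lambda>n. r (n + k) * x ^ n) sums 0" if x: "x \<noteq> 0" "norm x < 1" for x :: real
  proof -
    have "(\<lambda>m. r m * x ^ m) sums 0"
      by (rule assms) (use x in auto)
    moreover have "(\<Sum>i<k. r i * x ^ i) = 0"
      using less.IH by simp
    ultimately have "(\<lambda>n. r (n + k) * x ^ (n + k)) sums 0"
      using sums_iff_shift[of "\<lambda>m. r m * x ^ m" k 0] by simp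
    then have "(\<lambda>n. r (n + k) * x ^ (n + k) / x ^ k) sums (0 / x ^ k)"
      by (rule sums_divide)
    moreover have "(\<lambda>n. r (n + k) * x ^ (n + k) / x ^ k) = (\<lambda>n. r (n + k) * x ^ n)"
      using x by (auto simp: power_add)
    ultimately show ?thesis
      by simp
  qed
  then have "((\<lambda>x::real. 0) \<longlongrightarrow> r (0 + k)) (at 0)"
    by (intro powser_limit_0_strong[of 1]) auto
  then show "r k = 0"
    using LIM_const_eq by fastforce
qed

lemma integral_square_eq_0_if_moments_eq_0:
  fixes \<psi> :: "real \<Rightarrow> real"
  assumes cont: "continuous_on {-1..1} \<psi>"
    and moments: "\<And>m. integral {-1..1} (\<lambda>x. \<psi> x * x ^ m) = 0"
  shows "integral {-1..1} (\<lambda>x. (\<psi> x)\<^sup>2) = 0"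
proof -
  obtain B where B: "\<And>x. x \<in> {-1..1} \<Longrightarrow> \<bar>\<psi> x\<bar> \<le> B"
    using continuous_on_compact_bound[OF compact_Icc cont] by auto
  then have "B \<ge> 0"
    by force
  have orth: "integral {-1..1} (\<lambda>x. \<psi> x * g x) = 0" if "real_polynomial_function g" for g
  proof -
    obtain c N where g: "g = (\<lambda>x. \<Sum>i\<le>N. c i * x ^ i)"
      using \<open>real_polynomial_function g\<close> real_polynomial_function_iff_sum by blast
    have "integral {-1..1} (\<lambda>x. \<psi> x * g x) = (\<Sum>i\<le>N. c i * integral {-1..1} (\<lambda>x. \<psi> x * x ^ i))"
      unfolding g sum_distrib_left mult.left_commute[of "\<psi> _"]
      by (subst integral_sum) (auto intro!: integrable_continuous_real continuous_intros cont)
    then show ?thesis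
      by (simp add: moments)
  qed
  have "norm (integral {-1..1} (\<lambda>x. (\<psi> x)\<^sup>2)) \<le> 0 + e" if "e > 0" for e
  proof -
    obtain g where g: "polynomial_function g"
      and approx: "\<And>x. x \<in> {-1..1} \<Longrightarrow> \<bar>\<psi> x - g x\<bar> < e / (2 * B + 2)"
      using Stone_Weierstrass_polynomial_function[OF compact_Icc cont, of "e / (2 * B + 2)"]
        \<open>e > 0\<close> \<open>B \<ge> 0\<close> by auto
    have "continuous_on {-1..1} g"
      using g by (rule continuous_on_polymonial_function)
    moreover have "integral {-1..1} (\<lambda>x. \<psi> x * g x) = 0"
      using g orth real_polynomial_function_eq by blast
    ultimately have "integral {-1..1} (\<lambda>x. (\<psi> x)\<^sup>2) = integral {-1..1} (\<lambda>x. \<psi> x * (\<psi> x - g x))"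
      by (simp add: power2_eq_square right_diff_distrib integral_diff
          integrable_continuous_real continuous_intros cont)
    also have "norm \<dots> \<le> B * (e / (2 * B + 2)) * (1 - (-1))"
    proof (rule integral_bound)
      show "continuous_on {-1..1} (\<lambda>x. \<psi> x * (\<psi> x - g x))"
        by (intro continuous_intros cont \<open>continuous_on {-1..1} g\<close>)
      show "norm (\<psi> x * (\<psi> x - g x)) \<le> B * (e / (2 * B + 2))" if "x \<in> {-1..1}" for x
        unfolding real_norm_def abs_mult
        using B[OF that] approx[OF that] \<open>B \<ge> 0\<close> by (intro mult_mono) auto
    qed simp
    also have "\<dots> \<le> 0 + e"
      using \<open>e > 0\<close> \<open>B \<ge> 0\<close> by (simp add: field_simps)
    finally show ?thesis .
  qed
  then show ?thesis
    using field_le_epsilon[of "norm (integral {-1..1} (\<lambda>x. (\<psi> x)\<^sup>2))" 0] by simp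
qed

lemma Fc_sums_moment_series:
  fixes \<psi> :: "real \<Rightarrow> real"
  assumes cont: "continuous_on {-1..1} \<psi>" and x: "x \<in> {-1..1}"
  shows "(\<lambda>m. complex_of_real (integral {-1..1} (\<lambda>s. \<psi> s * s ^ m)) * ((\<i> * of_real (c * x)) ^ m / fact m))
           sums Fc c (\<lambda>t. complex_of_real (\<psi> t)) x"
proof -
  define z where "z = \<i> * complex_of_real (c * x)"
  define \<rho> where "\<rho> m = integral {-1..1} (\<lambda>s. \<psi> s * s ^ m)" for m
  define g where "g m s = complex_of_real (\<psi> s * s ^ m) * (z ^ m / fact m)" for m s
  obtain B where B: "\<And>s. s \<in> {-1..1} \<Longrightarrow> \<bar>\<psi> s\<bar> \<le> B"
    using continuous_on_compact_bound[OF compact_Icc cont] by auto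
  have g_integral: "(g m has_integral (complex_of_real (\<rho> m) * (z ^ m / fact m))) {-1..1}" for m
  proof -
    have "((\<lambda>s. \<psi> s * s ^ m) has_integral \<rho> m) {-1..1}"
      unfolding \<rho>_def by (intro integrable_integral integrable_continuous_real continuous_intros cont)
    then show ?thesis
      unfolding g_def by (intro has_integral_mult_left has_integral_of_real)
  qed
  have g_bound: "norm (g m s) \<le> B * (inverse (fact m) * \<bar>c\<bar> ^ m)" if s: "s \<in> {-1..1}" for m s
  proof -
    have "\<bar>x\<bar> \<le> 1" "\<bar>s\<bar> \<le> 1"
      using x s by auto
    have "norm (g m s) = (\<bar>\<psi> s\<bar> * \<bar>s\<bar> ^ m) * (\<bar>c\<bar> ^ m * \<bar>x\<bar> ^ m / fact m)"
      unfolding g_def z_def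
      by (simp add: norm_mult norm_divide norm_power abs_mult power_abs power_mult_distrib)
    also have "\<dots> \<le> (B * 1) * (\<bar>c\<bar> ^ m * 1 / fact m)"
      using \<open>\<bar>x\<bar> \<le> 1\<close> \<open>\<bar>s\<bar> \<le> 1\<close> B[OF s]
      by (intro mult_mono divide_right_mono power_le_one) (auto simp: power_le_one mult_le_one)
    finally show ?thesis
      by (simp add: field_simps)
  qed
  have "uniform_limit {-1..1} (\<lambda>n s. \<Sum>m<n. g m s) (\<lambda>s. \<Sum>m. g m s) sequentially"
    by (rule Weierstrass_m_test[OF g_bound]) (auto intro!: summable_mult summable_exp)
  then obtain I J where I: "\<And>n. ((\<lambda>s. \<Sum>m<n. g m s) has_integral I n) {-1..1}"
    and J: "((\<lambda>s. \<Sum>m. g m s) has_integral J) {-1..1}" and "I \<longlonglongrightarrow> J"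
    by (rule uniform_limit_integral) (auto intro!: continuous_intros cont simp: g_def)
  have "I = (\<lambda>n. \<Sum>m<n. complex_of_real (\<rho> m) * (z ^ m / fact m))"
  proof
    show "I n = (\<Sum>m<n. complex_of_real (\<rho> m) * (z ^ m / fact m))" for n
      using has_integral_unique[OF I[of n] has_integral_sum[OF _ g_integral]] by simp
  qed
  moreover have "(\<Sum>m. g m s) = complex_of_real (\<psi> s) * exp (\<i> * complex_of_real (c * x * s))" for s
  proof -
    have "(\<lambda>m. complex_of_real (\<psi> s) * ((z * of_real s) ^ m /\<^sub>R fact m))
        sums (complex_of_real (\<psi> s) * exp (z * of_real s))"
      by (intro sums_mult exp_converges)
    moreover have "(\<lambda>m. complex_of_real (\<psi> s) * ((z * of_real s) ^ m /\<^sub>R fact m)) = (\<lambda>m. g m s)"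
      unfolding g_def by (auto simp: power_mult_distrib scaleR_conv_of_real field_simps)
    ultimately show ?thesis
      unfolding z_def by (simp add: sums_iff mult.assoc)
  qed
  then have "J = Fc c (\<lambda>t. complex_of_real (\<psi> t)) x"
    unfolding Fc_def using J by (simp add: integral_unique)
  ultimately show ?thesis
    using \<open>I \<longlonglongrightarrow> J\<close> unfolding sums_def \<rho>_def z_def by simp
qed

lemma abs_integral_times_power_le:
  fixes \<psi> :: "real \<Rightarrow> real"
  assumes cont: "continuous_on {-1..1} \<psi>" and B: "\<And>s. s \<in> {-1..1} \<Longrightarrow> \<bar>\<psi> s\<bar> \<le> B"
  shows "\<bar>integral {-1..1} (\<lambda>s. \<psi> s * s ^ m)\<bar> \<le> 2 * B"
proof -
  have "norm (integral {-1..1} (\<lambda>s. \<psi> s * s ^ m)) \<le> B * (1 - (-1))"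
  proof (rule integral_bound)
    show "continuous_on {-1..1} (\<lambda>s. \<psi> s * s ^ m)"
      by (intro continuous_intros cont)
    show "norm (\<psi> s * s ^ m) \<le> B" if "s \<in> {-1..1}" for s
    proof -
      have "\<bar>s\<bar> ^ m \<le> 1"
        using that by (intro power_le_one) auto
      then show ?thesis
        using B[OF that] mult_mono[of "\<bar>\<psi> s\<bar>" B "\<bar>s\<bar> ^ m" 1] by (simp add: abs_mult power_abs)
    qed
  qed simp
  then show ?thesis
    by simp
qed

lemma Fc_eigenvalue_neq_0:
  fixes \<psi> :: "real \<Rightarrow> real"
  assumes c: "c > 0" and cont: "continuous_on {-1..1} \<psi>"
    and nonzero: "integral {-1..1} (\<lambda>x. (\<psi> x)\<^sup>2) \<noteq> 0"
    and eigen: "\<And>x. x \<in> {-1..1} \<Longrightarrow> Fc c (\<lambda>t. complex_of_real (\<psi> t)) x = lam * complex_of_real (\<psi> x)"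
  shows "lam \<noteq> 0"
proof
  assume "lam = 0"
  define d where "d m = complex_of_real (integral {-1..1} (\<lambda>s. \<psi> s * s ^ m))
    * ((\<i> * complex_of_real c) ^ m / fact m)" for m
  have "(\<lambda>m. Re (d m) * x ^ m) sums 0 \<and> (\<lambda>m. Im (d m) * x ^ m) sums 0" if "x \<in> {-1..1}" for x
  proof -
    have "(\<lambda>m. d m * complex_of_real (x ^ m)) sums 0"
      using Fc_sums_moment_series[OF cont that, of c] eigen[OF that] \<open>lam = 0\<close>
      unfolding d_def by (simp add: power_mult_distrib mult_ac)
    then show ?thesis
      using sums_complex_iff[of "\<lambda>m. d m * complex_of_real (x ^ m)"] by simp
  qed
  then have "Re (d m) = 0" "Im (d m) = 0" for m
    by (intro powser_coeffs_eq_0[of "\<lambda>m. Re (d m)"] powser_coeffs_eq_0[of "\<lambda>m. Im (d m)"]; blast)+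
  then have "d m = 0" for m
    by (simp add: complex_eq_iff)
  then have "integral {-1..1} (\<lambda>s. \<psi> s * s ^ m) = 0" for m
    using c unfolding d_def by simp
  then show False
    using integral_square_eq_0_if_moments_eq_0[OF cont] nonzero by blast
qed

lemma Fc_eigenfunction_power_series:
  fixes \<psi> :: "real \<Rightarrow> real"
  assumes c: "c > 0" and cont: "continuous_on {-1..1} \<psi>"
    and nonzero: "integral {-1..1} (\<lambda>x. (\<psi> x)\<^sup>2) \<noteq> 0"
    and eigen: "\<And>x. x \<in> {-1..1} \<Longrightarrow> Fc c (\<lambda>t. complex_of_real (\<psi> t)) x = lam * complex_of_real (\<psi> x)"
  obtains a K where "\<And>m. \<bar>a m\<bar> \<le> K * c ^ m / fact m"
    and "\<And>x. x \<in> {-1..1} \<Longrightarrow> (\<lambda>m. a m * x ^ m) sums \<psi> x"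
proof -
  obtain B where B: "\<And>s. s \<in> {-1..1} \<Longrightarrow> \<bar>\<psi> s\<bar> \<le> B"
    using continuous_on_compact_bound[OF compact_Icc cont] by auto
  define \<rho> where "\<rho> m = integral {-1..1} (\<lambda>s. \<psi> s * s ^ m)" for m
  define d where "d m = complex_of_real (\<rho> m) * ((\<i> * complex_of_real c) ^ m / fact m) / lam" for m
  have "lam \<noteq> 0"
    using Fc_eigenvalue_neq_0[OF assms] .
  have bound: "\<bar>Re (d m)\<bar> \<le> (2 * B / cmod lam) * c ^ m / fact m" for m
  proof -
    have "\<bar>Re (d m)\<bar> \<le> cmod (d m)"
      by (rule abs_Re_le_cmod)
    also have "\<dots> = \<bar>\<rho> m\<bar> * c ^ m / fact m / cmod lam"
      unfolding d_def using c by (simp add: norm_mult norm_divide norm_power)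
    also have "\<dots> \<le> (2 * B) * c ^ m / fact m / cmod lam"
      using abs_integral_times_power_le[OF cont B, of m] c unfolding \<rho>_def
      by (intro divide_right_mono mult_right_mono) auto
    finally show ?thesis
      by (simp add: mult_ac)
  qed
  have "(\<lambda>m. Re (d m) * x ^ m) sums \<psi> x" if "x \<in> {-1..1}" for x
  proof -
    have "(\<lambda>m. d m * complex_of_real (x ^ m)) sums complex_of_real (\<psi> x)"
      using sums_divide[OF Fc_sums_moment_series[OF cont that, of c], of lam] eigen[OF that] \<open>lam \<noteq> 0\<close>
      unfolding d_def \<rho>_def by (simp add: power_mult_distrib mult_ac)
    then have "(\<lambda>m. Re (d m * complex_of_real (x ^ m))) sums Re (complex_of_real (\<psi> x))"
      unfolding sums_complex_iff by blast
    moreover have "Re (d m * complex_of_real (x ^ m)) = Re (d m) * x ^ m" for m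
      by (simp only: times_complex.sel Re_complex_of_real Im_complex_of_real mult_zero_right diff_zero)
    ultimately show ?thesis
      by simp
  qed
  with bound show ?thesis
    by (rule that)
qed

lemma summable_factorial_bound:
  fixes a :: "nat \<Rightarrow> real"
  assumes bound: "\<And>m. \<bar>a m\<bar> \<le> K * c ^ m / fact m" and "c \<ge> 0" and "y \<ge> 0"
  shows "summable (\<lambda>m. \<bar>a m\<bar> * real m ^ 2 * y ^ m)"
proof (rule summable_comparison_test')
  show "summable (\<lambda>m. K * (inverse (fact m) * (4 * c * y) ^ m))"
    by (intro summable_mult summable_exp)
  show "norm (\<bar>a m\<bar> * real m ^ 2 * y ^ m) \<le> K * (inverse (fact m) * (4 * c * y) ^ m)" for m
  proof -
    have "real m ^ 2 \<le> 4 ^ m"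
    proof -
      have "real m \<le> 2 ^ m"
        using less_exp[of m] by (metis less_imp_le of_nat_le_iff of_nat_numeral of_nat_power)
      then have "real m ^ 2 \<le> (2 ^ m) ^ 2"
        by (rule power_mono) simp
      also have "\<dots> = 4 ^ m"
        by (simp add: power2_eq_square flip: power_mult_distrib)
      finally show ?thesis .
    qed
    have "norm (\<bar>a m\<bar> * real m ^ 2 * y ^ m) = \<bar>a m\<bar> * (real m ^ 2 * y ^ m)"
      using \<open>y \<ge> 0\<close> by (simp add: abs_mult)
    also have "\<dots> \<le> K * c ^ m / fact m * (4 ^ m * y ^ m)"
      using bound[of m] \<open>real m ^ 2 \<le> 4 ^ m\<close> \<open>y \<ge> 0\<close>
      by (intro mult_mono) auto
    also have "\<dots> = K * (inverse (fact m) * (4 * c * y) ^ m)"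
      by (simp add: power_mult_distrib field_simps)
    finally show ?thesis .
  qed
qed

section \<open>Dividing out a root of a power series\<close>

definition divided_power :: "nat \<Rightarrow> real \<Rightarrow> real \<Rightarrow> real" where
  "divided_power m t s = (\<Sum>i<m. t ^ (m - Suc i) * s ^ i)"

lemma power_diff_eq_divided_power: "s ^ m - t ^ m = (s - t) * divided_power m t s"
  unfolding divided_power_def by (rule power_diff_sumr2)

lemma continuous_on_divided_power [continuous_intros]: "continuous_on S (divided_power m t)"
  unfolding divided_power_def by (intro continuous_intros)

lemma abs_divided_power_le:
  assumes "\<bar>t\<bar> \<le> 1" and "\<bar>s\<bar> \<le> 1"
  shows "\<bar>divided_power m t s\<bar> \<le> real m"
proof -
  have "\<bar>divided_power m t s\<bar> \<le> (\<Sum>i<m. \<bar>t ^ (m - Suc i) * s ^ i\<bar>)"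
    unfolding divided_power_def by (rule sum_abs)
  also have "\<dots> \<le> (\<Sum>i<m. 1)"
    using assms by (intro sum_mono) (simp add: abs_mult power_abs mult_le_one power_le_one)
  finally show ?thesis
    by simp
qed

lemma integral_divided_power_legendreP:
  assumes "m \<le> N"
  shows "integral {-1..1} (\<lambda>s. divided_power m t s * legendreP N s) = 0"
  unfolding divided_power_def using integral_polynomial_legendreP[OF assms] .

lemma summable_divided_power_series:
  assumes "summable (\<lambda>m. \<bar>a m\<bar> * real m)" and "\<bar>t\<bar> \<le> 1" and "\<bar>s\<bar> \<le> 1"
  shows "summable (\<lambda>m. a m * divided_power m t s)"
  using assms abs_divided_power_le[OF assms(2,3)]
  by (intro summable_comparison_test[OF _ assms(1)]) (auto simp: abs_mult mult_left_mono)

lemma power_series_root_factor: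
  assumes summable: "summable (\<lambda>m. \<bar>a m\<bar> * real m)"
    and ser: "\<And>x. x \<in> {-1..1} \<Longrightarrow> (\<lambda>m. a m * x ^ m) sums \<psi> x"
    and t: "t \<in> {-1..1}" and root: "\<psi> t = 0" and s: "s \<in> {-1..1}"
  shows "\<psi> s = (s - t) * (\<Sum>m. a m * divided_power m t s)"
proof -
  have "(\<lambda>m. a m * s ^ m - a m * t ^ m) sums (\<psi> s - \<psi> t)"
    by (rule sums_diff[OF ser[OF s] ser[OF t]])
  moreover have "(\<lambda>m. a m * s ^ m - a m * t ^ m) = (\<lambda>m. (s - t) * (a m * divided_power m t s))"
    by (simp add: power_diff_eq_divided_power flip: right_diff_distrib) (simp add: algebra_simps)
  ultimately have "(\<lambda>m. (s - t) * (a m * divided_power m t s)) sums \<psi> s"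
    using root by simp
  moreover have "(\<lambda>m. (s - t) * (a m * divided_power m t s)) sums ((s - t) * (\<Sum>m. a m * divided_power m t s))"
    using summable_divided_power_series[OF summable] s t by (intro sums_mult summable_sums) auto
  ultimately show ?thesis
    using sums_unique2 by blast
qed

lemma continuous_on_divided_power_series:
  assumes summable: "summable (\<lambda>m. \<bar>a m\<bar> * real m)" and "\<bar>t\<bar> \<le> 1"
  shows "continuous_on {-1..1} (\<lambda>s. \<Sum>m. a m * divided_power m t s)"
proof -
  have "norm (a m * divided_power m t s) \<le> \<bar>a m\<bar> * real m" if "s \<in> {-1..1}" for m s
  proof -
    have "\<bar>s\<bar> \<le> 1"
      using that by auto
    then show ?thesis
      using abs_divided_power_le[OF \<open>\<bar>t\<bar> \<le> 1\<close>, of s m] by (simp add: abs_mult mult_left_mono)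
  qed
  then have unif: "uniform_limit {-1..1} (\<lambda>n s. \<Sum>m<n. a m * divided_power m t s)
      (\<lambda>s. \<Sum>m. a m * divided_power m t s) sequentially"
    using summable by (rule Weierstrass_m_test)
  show ?thesis
    by (rule uniform_limit_theorem[OF _ unif]) (auto intro!: always_eventually continuous_intros)
qed

lemma abs_divided_power_series_tail_le:
  assumes summable: "summable (\<lambda>m. \<bar>a m\<bar> * real m)" and "\<bar>t\<bar> \<le> 1" and "\<bar>s\<bar> \<le> 1"
  shows "\<bar>(\<Sum>m. a m * divided_power m t s) - (\<Sum>m<n. a m * divided_power m t s)\<bar>
           \<le> (\<Sum>i. \<bar>a (i + n)\<bar> * real (i + n))"
proof -
  have tail_summable: "summable (\<lambda>i. \<bar>a (i + n)\<bar> * real (i + n))"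
    using summable by (subst summable_iff_shift)
  have term_le: "norm (a (i + n) * divided_power (i + n) t s) \<le> \<bar>a (i + n)\<bar> * real (i + n)" for i
    using abs_divided_power_le[OF assms(2,3), of "i + n"] by (simp add: abs_mult mult_left_mono)
  have "(\<Sum>m. a m * divided_power m t s) - (\<Sum>m<n. a m * divided_power m t s)
      = (\<Sum>i. a (i + n) * divided_power (i + n) t s)"
    using suminf_split_initial_segment[OF summable_divided_power_series[OF assms], of n] by linarith
  also have "\<bar>\<dots>\<bar> \<le> (\<Sum>i. \<bar>a (i + n)\<bar> * real (i + n))"
  proof -
    have "summable (\<lambda>i. norm (a (i + n) * divided_power (i + n) t s))"
      using term_le by (intro summable_comparison_test'[OF tail_summable]) simp
    then show ?thesis
      using summable_norm suminf_le[OF term_le _ tail_summable] by fastforce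
  qed
  finally show ?thesis .
qed

lemma abs_integral_divided_power_series_legendreP_le:
  assumes summable: "summable (\<lambda>m. \<bar>a m\<bar> * real m)" and "\<bar>t\<bar> \<le> 1"
  shows "\<bar>integral {-1..1} (\<lambda>s. (\<Sum>m. a m * divided_power m t s) * legendreP N s)\<bar>
           \<le> 2 * 3 ^ N * (\<Sum>i. \<bar>a (i + Suc N)\<bar> * real (i + Suc N))"
proof -
  define F where "F s = (\<Sum>m. a m * divided_power m t s)" for s
  define H where "H s = (F s - (\<Sum>m<Suc N. a m * divided_power m t s)) * legendreP N s" for s
  have F_cont: "continuous_on {-1..1} F"
    unfolding F_def by (rule continuous_on_divided_power_series[OF assms])
  have "summable (\<lambda>i. \<bar>a (i + Suc N)\<bar> * real (i + Suc N))"
    using summable by (subst summable_iff_shift)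
  then have "0 \<le> (\<Sum>i. \<bar>a (i + Suc N)\<bar> * real (i + Suc N))"
    by (rule suminf_nonneg) simp
  have "integral {-1..1} (\<lambda>s. \<Sum>m<Suc N. a m * (divided_power m t s * legendreP N s))
      = (\<Sum>m<Suc N. a m * integral {-1..1} (\<lambda>s. divided_power m t s * legendreP N s))"
    by (subst integral_sum) (auto intro!: integrable_continuous_real continuous_intros simp del: sum.lessThan_Suc)
  also have "\<dots> = 0"
    by (intro sum.neutral) (simp add: integral_divided_power_legendreP)
  finally have "integral {-1..1} H = integral {-1..1} (\<lambda>s. F s * legendreP N s)"
    unfolding H_def left_diff_distrib sum_distrib_right mult.assoc
    by (subst integral_diff) (auto intro!: integrable_continuous_real continuous_intros F_cont
        simp del: sum.lessThan_Suc)
  moreover have "norm (integral {-1..1} H) \<le> ((\<Sum>i. \<bar>a (i + Suc N)\<bar> * real (i + Suc N)) * 3 ^ N) * (1 - (-1))"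
  proof (rule integral_bound)
    show "continuous_on {-1..1} H"
      unfolding H_def by (intro continuous_intros F_cont)
    show "norm (H s) \<le> (\<Sum>i. \<bar>a (i + Suc N)\<bar> * real (i + Suc N)) * 3 ^ N" if "s \<in> {-1..1}" for s
      unfolding H_def F_def real_norm_def abs_mult
      using that abs_divided_power_series_tail_le[OF assms, of s "Suc N"] abs_legendreP_le[of s N]
        \<open>0 \<le> (\<Sum>i. \<bar>a (i + Suc N)\<bar> * real (i + Suc N))\<close>
      by (intro mult_mono) auto
  qed simp
  ultimately show ?thesis
    unfolding F_def by (simp add: mult_ac)
qed

section \<open>Partial sums of the \<open>Q\<close>-series\<close>

lemma legendre_coeff_legendreQ_partial_sum:
  assumes G: "continuous_on {-1..1} G"
    and factor: "\<And>s. s \<in> {-1..1} \<Longrightarrow> \<psi> s = (t - s) * G s"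
  shows "(\<Sum>k<Suc N. legendre_coeff \<psi> k * legendreQ k t)
           = integral {-1..1} G / 2
             - real (Suc N) / 2 * (legendreQ N t * integral {-1..1} (\<lambda>s. G s * legendreP (Suc N) s)
                                   - legendreQ (Suc N) t * integral {-1..1} (\<lambda>s. G s * legendreP N s))"
proof -
  have "continuous_on {-1..1} (\<lambda>s. (t - s) * G s)"
    by (intro continuous_intros G)
  then have \<psi>: "continuous_on {-1..1} \<psi>"
    by (rule continuous_on_eq) (simp add: factor)
  have pointwise: "(\<Sum>k<Suc N. (real k + 1/2) * legendreQ k t * (\<psi> s * legendreP k s))
      = G s / 2 - real (Suc N) / 2 * (legendreQ N t * (G s * legendreP (Suc N) s)
                                      - legendreQ (Suc N) t * (G s * legendreP N s))"
    if "s \<in> {-1..1}" for s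
  proof -
    define W where "W = (\<Sum>k\<le>N. (2 * real k + 1) * legendreP k s * legendreQ k t)"
    have "(\<Sum>k<Suc N. (real k + 1/2) * legendreQ k t * (\<psi> s * legendreP k s)) = \<psi> s * W / 2"
      unfolding W_def lessThan_Suc_atMost sum_distrib_left sum_divide_distrib
      by (intro sum.cong) (simp_all add: field_simps)
    also have "\<dots> = G s * ((t - s) * W) / 2"
      using factor[OF that] by simp
    also have "(t - s) * W = 1 - real (Suc N) * (legendreP (Suc N) s * legendreQ N t
                                                - legendreP N s * legendreQ (Suc N) t)"
      using legendre_christoffel_darboux[of N s t] unfolding W_def by (simp add: algebra_simps)
    finally show ?thesis
      by (rule trans) (simp add: algebra_simps diff_divide_distrib)
  qed
  have "(\<Sum>k<Suc N. legendre_coeff \<psi> k * legendreQ k t)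
      = (\<Sum>k<Suc N. integral {-1..1} (\<lambda>s. (real k + 1/2) * legendreQ k t * (\<psi> s * legendreP k s)))"
    unfolding legendre_coeff_def by (intro sum.cong refl) (simp add: integral_mult_right)
  also have "\<dots> = integral {-1..1} (\<lambda>s. \<Sum>k<Suc N. (real k + 1/2) * legendreQ k t * (\<psi> s * legendreP k s))"
    by (rule integral_sum[symmetric])
      (auto intro!: integrable_continuous_real continuous_intros \<psi> simp del: sum.lessThan_Suc)
  also have "\<dots> = integral {-1..1} (\<lambda>s. G s / 2 - real (Suc N) / 2
      * (legendreQ N t * (G s * legendreP (Suc N) s) - legendreQ (Suc N) t * (G s * legendreP N s)))"
    by (rule integral_cong) (rule pointwise)
  also have "\<dots> = integral {-1..1} G / 2
      - real (Suc N) / 2 * (legendreQ N t * integral {-1..1} (\<lambda>s. G s * legendreP (Suc N) s)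
                            - legendreQ (Suc N) t * integral {-1..1} (\<lambda>s. G s * legendreP N s))"
    by (simp add: integral_diff integral_mult_right integral_divide
        integrable_continuous_real continuous_intros G)
  finally show ?thesis .
qed

lemma summable_abs_times_real:
  fixes a :: "nat \<Rightarrow> real"
  assumes "summable (\<lambda>m. \<bar>a m\<bar> * real m ^ 2 * 9 ^ m)"
  shows "summable (\<lambda>m. \<bar>a m\<bar> * real m)"
proof (rule summable_comparison_test'[OF assms])
  show "norm (\<bar>a m\<bar> * real m) \<le> \<bar>a m\<bar> * real m ^ 2 * 9 ^ m" for m
  proof -
    have "real m \<le> real m ^ 2"
      by (cases m) (simp_all add: power2_eq_square)
    also have "\<dots> \<le> real m ^ 2 * 9 ^ m"
      by (rule mult_le_cancel_left1[THEN iffD2]) (auto simp: one_le_power)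
    finally have "\<bar>a m\<bar> * real m \<le> \<bar>a m\<bar> * (real m ^ 2 * 9 ^ m)"
      by (rule mult_left_mono) simp
    then show ?thesis
      by (simp add: mult.assoc)
  qed
qed

lemma weighted_tail_le:
  fixes a :: "nat \<Rightarrow> real"
  assumes summable: "summable (\<lambda>m. \<bar>a m\<bar> * real m ^ 2 * 9 ^ m)" and "Suc N \<le> n"
  shows "real (Suc N) * 9 ^ N * (\<Sum>i. \<bar>a (i + n)\<bar> * real (i + n))
           \<le> (\<Sum>i. \<bar>a (i + n)\<bar> * real (i + n) ^ 2 * 9 ^ (i + n))"
proof -
  have "summable (\<lambda>i. \<bar>a (i + n)\<bar> * real (i + n))"
    using summable_abs_times_real[OF summable] by (subst summable_iff_shift)
  moreover have "summable (\<lambda>i. \<bar>a (i + n)\<bar> * real (i + n) ^ 2 * 9 ^ (i + n))"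
    using summable by (subst summable_iff_shift)
  moreover have "real (Suc N) * 9 ^ N * (\<bar>a (i + n)\<bar> * real (i + n))
      \<le> \<bar>a (i + n)\<bar> * real (i + n) ^ 2 * 9 ^ (i + n)" for i
  proof -
    have "real (Suc N) * 9 ^ N * real (i + n) \<le> real (i + n) * 9 ^ (i + n) * real (i + n)"
      using \<open>Suc N \<le> n\<close> by (intro mult_right_mono mult_mono power_increasing) auto
    then have "\<bar>a (i + n)\<bar> * (real (Suc N) * 9 ^ N * real (i + n))
        \<le> \<bar>a (i + n)\<bar> * (real (i + n) * 9 ^ (i + n) * real (i + n))"
      by (rule mult_left_mono) simp
    then show ?thesis
      by (simp add: power2_eq_square mult_ac)
  qed
  ultimately show ?thesis
    by (simp add: suminf_le flip: suminf_mult)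
qed

lemma abs_legendre_boundary_term_le:
  fixes g \<tau> :: "nat \<Rightarrow> real"
  assumes "\<bar>t\<bar> \<le> 1" and g: "\<And>n. \<bar>g n\<bar> \<le> 2 * 3 ^ n * \<tau> (Suc n)"
  shows "\<bar>real (Suc N) / 2 * (legendreQ N t * g (Suc N) - legendreQ (Suc N) t * g N)\<bar>
           \<le> 3 * (\<bar>legendreQ 0 t\<bar> + \<bar>legendreQ 1 t\<bar>)
               * (real (Suc N) * 9 ^ N * \<tau> (Suc (Suc N)) + real (Suc N) * 9 ^ N * \<tau> (Suc N))"
proof -
  define C where "C = \<bar>legendreQ 0 t\<bar> + \<bar>legendreQ 1 t\<bar>"
  have Qg: "\<bar>legendreQ k t * g n\<bar> \<le> C * 3 ^ k * (2 * 3 ^ n * \<tau> (Suc n))" for k n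
    unfolding abs_mult C_def using abs_legendreQ_le[OF \<open>\<bar>t\<bar> \<le> 1\<close>, of k] g[of n]
    by (intro mult_mono) auto
  have "\<bar>real (Suc N) / 2 * (legendreQ N t * g (Suc N) - legendreQ (Suc N) t * g N)\<bar>
      \<le> real (Suc N) / 2 * (\<bar>legendreQ N t * g (Suc N)\<bar> + \<bar>legendreQ (Suc N) t * g N\<bar>)"
    unfolding abs_mult[of "real (Suc N) / 2"] by (simp add: mult_left_mono abs_triangle_ineq4)
  also have "\<dots> \<le> real (Suc N) / 2 * (C * 3 ^ N * (2 * 3 ^ Suc N * \<tau> (Suc (Suc N)))
                                     + C * 3 ^ Suc N * (2 * 3 ^ N * \<tau> (Suc N)))"
    by (intro mult_left_mono add_mono Qg) auto
  also have "\<dots> = 3 * C * (real (Suc N) * 9 ^ N * \<tau> (Suc (Suc N)) + real (Suc N) * 9 ^ N * \<tau> (Suc N))"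
  proof -
    define x :: real where "x = 3 ^ N"
    have "3 ^ Suc N = 3 * x" "9 ^ N = x * x"
      unfolding x_def by (simp_all flip: power_mult_distrib)
    then show ?thesis
      unfolding x_def[symmetric] by (simp add: field_simps)
  qed
  finally show ?thesis
    unfolding C_def .
qed

lemma legendre_boundary_term_tendsto_0:
  fixes a :: "nat \<Rightarrow> real"
  assumes summable: "summable (\<lambda>m. \<bar>a m\<bar> * real m ^ 2 * 9 ^ m)" and "\<bar>t\<bar> \<le> 1"
  defines "G \<equiv> \<lambda>s. - (\<Sum>m. a m * divided_power m t s)"
  shows "(\<lambda>N. real (Suc N) / 2 * (legendreQ N t * integral {-1..1} (\<lambda>s. G s * legendreP (Suc N) s)
                                  - legendreQ (Suc N) t * integral {-1..1} (\<lambda>s. G s * legendreP N s)))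
           \<longlonglongrightarrow> 0"
proof -
  define tail where "tail n = (\<Sum>i. \<bar>a (i + n)\<bar> * real (i + n))" for n
  define wtail where "wtail n = (\<Sum>i. \<bar>a (i + n)\<bar> * real (i + n) ^ 2 * 9 ^ (i + n))" for n
  define C where "C = \<bar>legendreQ 0 t\<bar> + \<bar>legendreQ 1 t\<bar>"
  have "\<bar>integral {-1..1} (\<lambda>s. G s * legendreP n s)\<bar> \<le> 2 * 3 ^ n * tail (Suc n)" for n
    using abs_integral_divided_power_series_legendreP_le[OF summable_abs_times_real[OF summable]
        \<open>\<bar>t\<bar> \<le> 1\<close>, of n]
    unfolding G_def tail_def by (simp add: integral_minus)
  note boundary_le = abs_legendre_boundary_term_le[OF \<open>\<bar>t\<bar> \<le> 1\<close> this]
  have "wtail \<longlonglongrightarrow> 0"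
    unfolding wtail_def by (rule suminf_exist_split2[OF summable])
  then have "(\<lambda>N. wtail (Suc N)) \<longlonglongrightarrow> 0"
    by (rule LIMSEQ_Suc)
  moreover from this have "(\<lambda>N. wtail (Suc (Suc N))) \<longlonglongrightarrow> 0"
    by (rule LIMSEQ_Suc)
  ultimately have "(\<lambda>N. 3 * C * (wtail (Suc (Suc N)) + wtail (Suc N))) \<longlonglongrightarrow> 0"
    by (intro tendsto_mult_right_zero tendsto_add_zero)
  then show ?thesis
  proof (rule Lim_null_comparison[rotated], intro always_eventually allI)
    fix N
    have "3 * C * (real (Suc N) * 9 ^ N * tail (Suc (Suc N)) + real (Suc N) * 9 ^ N * tail (Suc N))
        \<le> 3 * C * (wtail (Suc (Suc N)) + wtail (Suc N))"
      unfolding tail_def wtail_def C_def by (intro mult_left_mono add_mono weighted_tail_le[OF summable]) auto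
    then show "norm (real (Suc N) / 2 * (legendreQ N t * integral {-1..1} (\<lambda>s. G s * legendreP (Suc N) s)
        - legendreQ (Suc N) t * integral {-1..1} (\<lambda>s. G s * legendreP N s)))
        \<le> 3 * C * (wtail (Suc (Suc N)) + wtail (Suc N))"
      using boundary_le[of N] unfolding C_def by simp
  qed
qed

lemma legendreQ_series_at_root:
  fixes a :: "nat \<Rightarrow> real" and \<psi> :: "real \<Rightarrow> real"
  assumes summable: "summable (\<lambda>m. \<bar>a m\<bar> * real m ^ 2 * 9 ^ m)"
    and ser: "\<And>x. x \<in> {-1..1} \<Longrightarrow> (\<lambda>m. a m * x ^ m) sums \<psi> x"
    and t: "t \<in> {-1<..<1}" and root: "\<psi> t = 0"
  shows "(\<lambda>k. legendre_coeff \<psi> k * legendreQ k t) sums (integral {-1..1} (\<lambda>s. \<psi> s / (t - s)) / 2)"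
proof -
  have "\<bar>t\<bar> \<le> 1"
    using t by auto
  note summable1 = summable_abs_times_real[OF summable]
  define G where "G = (\<lambda>s. - (\<Sum>m. a m * divided_power m t s))"
  have G_cont: "continuous_on {-1..1} G"
    unfolding G_def using continuous_on_divided_power_series[OF summable1 \<open>\<bar>t\<bar> \<le> 1\<close>]
    by (intro continuous_intros)
  have factor: "\<psi> s = (t - s) * G s" if "s \<in> {-1..1}" for s
    using power_series_root_factor[OF summable1 ser _ root that] t unfolding G_def
    by (auto simp: algebra_simps)
  have "(\<lambda>N. integral {-1..1} G / 2 - real (Suc N) / 2
          * (legendreQ N t * integral {-1..1} (\<lambda>s. G s * legendreP (Suc N) s)
             - legendreQ (Suc N) t * integral {-1..1} (\<lambda>s. G s * legendreP N s)))
      \<longlonglongrightarrow> integral {-1..1} G / 2 - 0"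
    using legendre_boundary_term_tendsto_0[OF summable \<open>\<bar>t\<bar> \<le> 1\<close>] unfolding G_def
    by (intro tendsto_diff tendsto_const)
  moreover note legendre_coeff_legendreQ_partial_sum[OF G_cont factor]
  ultimately have "(\<lambda>N. \<Sum>k<Suc N. legendre_coeff \<psi> k * legendreQ k t) \<longlonglongrightarrow> integral {-1..1} G / 2"
    by simp
  then have "(\<lambda>N. \<Sum>k<N. legendre_coeff \<psi> k * legendreQ k t) \<longlonglongrightarrow> integral {-1..1} G / 2"
    by (rule LIMSEQ_imp_Suc)
  moreover have "integral {-1..1} (\<lambda>s. \<psi> s / (t - s)) = integral {-1..1} G"
  proof (rule integral_spike[of "{t}"])
    show "G s = \<psi> s / (t - s)" if "s \<in> {-1..1} - {t}" for s
      using factor[of s] that by auto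
  qed simp
  ultimately show ?thesis
    unfolding sums_def by simp
qed

theorem theorem67:
  fixes c :: real and n :: nat and \<psi> :: "real \<Rightarrow> real" and tj :: real
  assumes "c > 0"
    and "is_pswf c n \<psi>"
    and "tj \<in> {-1<..<1}" and "\<psi> tj = 0"
  shows "(\<lambda>k. legendre_coeff \<psi> k * legendreQ k tj) sums
           (integral {-1..1} (\<lambda>t. \<psi> t / (tj - t)) / 2)"
proof -
  obtain lam where cont: "continuous_on {-1..1} \<psi>"
    and normalized: "integral {-1..1} (\<lambda>x. (\<psi> x)\<^sup>2) = 1"
    and eigen: "\<And>x. x \<in> {-1..1} \<Longrightarrow> Fc c (\<lambda>t. complex_of_real (\<psi> t)) x = lam * complex_of_real (\<psi> x)"
    using assms(2) unfolding is_pswf_def by blast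
  obtain a K where bound: "\<And>m. \<bar>a m\<bar> \<le> K * c ^ m / fact m"
    and ser: "\<And>x. x \<in> {-1..1} \<Longrightarrow> (\<lambda>m. a m * x ^ m) sums \<psi> x"
    using Fc_eigenfunction_power_series[OF assms(1) cont _ eigen] normalized by auto
  have "summable (\<lambda>m. \<bar>a m\<bar> * real m ^ 2 * 9 ^ m)"
    using bound assms(1) by (intro summable_factorial_bound) auto
  then show ?thesis
    using ser assms(3,4) by (rule legendreQ_series_at_root)
qed

end
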